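(* Let $R$ be a unital commutative Hausdorff topological $\mathbb Q$-algebra with dense group of units which is locally $k_\omega$, let $E,F\in\mathrm{TopSMod}^{lko}_R$, let $U\subset E_\infty$ be DeWitt-open and let $f:U\to F_\infty$ be grounded and $\lambda^\infty$-smooth, with associated maps $f^{(k)}$. Then for all $x\in U$ and $y\in E_\infty^+$, $$f(x+y)=\sum_{k=0}^\infty\frac1{k!}\,f^{(k)}(x)(y,\dots,y)$$ (with $k$ arguments $y$ in the $k$-th term; only finitely many terms are nonzero).
   Context: $\lambda^n=R[\theta_1,\dots,\theta_n]$, $\lambda^\infty=R[\theta_i:i\in\mathbb N]$ Grassmann algebras on odd generators ($\lambda^n=\bigoplus_IR\theta_I$ product topology, $\lambda^\infty$ direct limit); $\varepsilon:\lambda\to R$ kills all $\theta_i$, $\lambda^{\infty+}=\ker\varepsilon$. For a Hausdorff graded topological $R$-module $E=E_0\oplus E_1$: $E\otimes\lambda^N=\prod_{|I|\le N}E\theta_I$, $E\otimes\lambda^\infty=\varinjlim E\otimes\lambda^N$ in Top, $E_\infty=(E\otimes\lambda^\infty)_0$, $E_\infty^+=(E\otimes\lambda^{\infty+})_0$, $\underline E(\lambda^\infty\theta_p)=(E\otimes\lambda^\infty\theta_p)_0$. $\mathrm{TopSMod}^{lko}_R$: such $E$ which are locally $k_\omega$ (Hausdorff, every point with an open neighbourhood which is a topological direct limit of an increasing sequence of compact sets). DeWitt topology on $E_\infty$ (resp. $E\otimes\lambda^\infty$): coarsest topology making $\mathrm{id}\otimes\varepsilon$ to $E_0$ (resp.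 $E$) continuous. $U_R=U\cap E_0$; $f$ grounded means $f(U_R)\subset F_0$. $\lambda^\infty$-smooth: $f$ is DeWitt-continuous, $f_R=f|_{U_R}:U_R\to F_0$ is $\mathcal C^\infty$ over $R$ (Bertram–Glöckner–Neeb: $g(x+tv)-g(x)=t\,g^{[1]}(x,v,t)$ with continuous $g^{[1]}$, iterated), and there are DeWitt-continuous maps $f^{(k)}:U\times(E\otimes\lambda^\infty)^k\to F\otimes\lambda^\infty$, $k\ge1$ (and $f^{(0)}=f$), such that: (i) for $x\in U$, $f^{(k)}(x)=f^{(k)}(x,\cdot)$ is even, $\lambda^\infty$-multilinear, supersymmetric ($f^{(k)}(x)(\dots,u,v,\dots)=(-1)^{|u||v|}f^{(k)}(x)(\dots,v,u,\dots)$ for homogeneous $u,v$), and $f^{(k)}(x)(E^k)\subset F$; (ii) $f^{(k)}$ extends $d^kf_R$; (iii) for $k\ge0$, $p\ge1$, $x\in U$, $a\in\underline E(\lambda^\infty\theta_p)$, $v_1,\dots,v_k\in E_\infty$: $f^{(k+1)}(x)(a,v_1,\dots,v_k)=(f^{(k)}(x+a)-f^{(k)}(x))(v_1,\dots,v_k)$. *)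

theory Defs
  imports "HOL-Analysis.Analysis" "HOL-Library.Function_Algebras"
begin

definition kw_space :: "'x::topological_space set \<Rightarrow> bool" where
  "kw_space U \<longleftrightarrow> (\<exists>K::nat \<Rightarrow> 'x set. (\<forall>n. compact (K n)) \<and> incseq K \<and> U = (\<Union>n. K n) \<and>
     (\<forall>A. A \<subseteq> U \<longrightarrow> (openin (top_of_set U) A \<longleftrightarrow> (\<forall>n. openin (top_of_set (K n)) (A \<inter> K n)))))"

text \<open>Locally k-omega (Hausdorffness is imposed separately via the class t2_space).\<close>
definition locally_kw :: "'x::topological_space set \<Rightarrow> bool" where
  "locally_kw S \<longleftrightarrow> (\<forall>x\<in>S. \<exists>U. open U \<and> x \<in> U \<and> kw_space U)"

definition topring :: "'r::{comm_ring_1,topological_space} itself \<Rightarrow> bool" where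
  "topring TYPE('r) \<longleftrightarrow>
     continuous_on UNIV (\<lambda>p::'r\<times>'r. fst p + snd p) \<and>
     continuous_on UNIV (\<lambda>p::'r\<times>'r. fst p * snd p) \<and>
     continuous_on UNIV (uminus :: 'r \<Rightarrow> 'r)"

definition is_unit :: "'r::comm_ring_1 \<Rightarrow> bool" where
  "is_unit t \<longleftrightarrow> (\<exists>u. t * u = 1)"

definition topmod :: "('r::{comm_ring_1,topological_space} \<Rightarrow> 'm::{ab_group_add,topological_space} \<Rightarrow> 'm) \<Rightarrow> bool" where
  "topmod s \<longleftrightarrow> module s \<and>
     continuous_on UNIV (\<lambda>p::'m\<times>'m. fst p + snd p) \<and>
     continuous_on UNIV (uminus :: 'm \<Rightarrow> 'm) \<and>
     continuous_on UNIV (\<lambda>p::'r\<times>'m. s (fst p) (snd p))"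

definition rinv :: "nat \<Rightarrow> 'r::comm_ring_1" where
  "rinv n = (THE u. of_nat n * u = 1)"

text \<open>Points of the iterated domains U^[k] are encoded uniformly as pairs
(E-coordinates, R-coordinates) indexed by nat; level j uses E-coordinates
0..<2^j and R-coordinates 0..<2^j-1, all others zero.  The subspace topology
induced by the product topology is then the product topology of E^(2^j) x R^(2^j-1).\<close>

type_synonym ('e,'r) cpt = "(nat \<Rightarrow> 'e) \<times> (nat \<Rightarrow> 'r)"

definition lev :: "nat \<Rightarrow> ('e::zero,'r::zero) cpt set" where
  "lev j = {P. (\<forall>i\<ge>2^j. fst P i = 0) \<and> (\<forall>i\<ge>2^j - 1. snd P i = 0)}"

definition cscale :: "('r::comm_ring_1 \<Rightarrow> 'e \<Rightarrow> 'e) \<Rightarrow> 'r \<Rightarrow> ('e,'r) cpt \<Rightarrow> ('e,'r) cpt" where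
  "cscale s t P = (\<lambda>i. s t (fst P i), \<lambda>i. t * snd P i)"

text \<open>join j x v t encodes the triple (x,v,t) in E_j x E_j x R as a level (j+1) point.\<close>
definition cjoin :: "nat \<Rightarrow> ('e::zero,'r::zero) cpt \<Rightarrow> ('e,'r) cpt \<Rightarrow> 'r \<Rightarrow> ('e,'r) cpt" where
  "cjoin j x v t =
    (\<lambda>i. if i < 2^j then fst x i else fst v (i - 2^j),
     \<lambda>i. if i < 2^j - 1 then snd x i
         else if i < 2 * (2^j - 1) then snd v (i - (2^j - 1))
         else if i = 2 * (2^j - 1) then t else 0)"

definition cD1 :: "('r::comm_ring_1 \<Rightarrow> 'e::ab_group_add \<Rightarrow> 'e) \<Rightarrow> nat \<Rightarrow> ('e,'r) cpt set \<Rightarrow> ('e,'r) cpt set" where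
  "cD1 s j D = {cjoin j x v t | x v t. x \<in> D \<and> v \<in> lev j \<and> x + cscale s t v \<in> D}"

text \<open>Ck s sc k j D g: g, defined on D \<subseteq> level j, is C^k over R in the sense of BGN.\<close>
fun Ck :: "('r::{comm_ring_1,topological_space} \<Rightarrow> 'e::{ab_group_add,topological_space} \<Rightarrow> 'e) \<Rightarrow>
           ('r \<Rightarrow> 'f::{ab_group_add,topological_space} \<Rightarrow> 'f) \<Rightarrow> nat \<Rightarrow> nat \<Rightarrow> ('e,'r) cpt set \<Rightarrow> (('e,'r) cpt \<Rightarrow> 'f) \<Rightarrow> bool" where
  "Ck s sc 0 j D g = continuous_on D g"
| "Ck s sc (Suc k) j D g = (continuous_on D g \<and>
     (\<exists>g1. Ck s sc k (Suc j) (cD1 s j D) g1 \<and>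
        (\<forall>x v t. x \<in> D \<and> v \<in> lev j \<and> x + cscale s t v \<in> D \<and> is_unit t \<longrightarrow>
            g (x + cscale s t v) - g x = sc t (g1 (cjoin j x v t)))))"

definition cemb0 :: "'e \<Rightarrow> ('e::zero,'r::zero) cpt" where
  "cemb0 e = (\<lambda>i. if i = 0 then e else 0, \<lambda>_. 0)"

definition smooth_R :: "('r::{comm_ring_1,topological_space} \<Rightarrow> 'e::{ab_group_add,topological_space} \<Rightarrow> 'e) \<Rightarrow>
     ('r \<Rightarrow> 'f::{ab_group_add,topological_space} \<Rightarrow> 'f) \<Rightarrow> 'e set \<Rightarrow> ('e \<Rightarrow> 'f) \<Rightarrow> bool" where
  "smooth_R s sc D g \<longleftrightarrow> (\<forall>k. Ck s sc k 0 ((cemb0 :: 'e \<Rightarrow> ('e,'r) cpt) ` D) (\<lambda>P. g (fst P 0)))"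

text \<open>First-order difference quotient witnesses and the derivative dg(x)(v) = g^[1](x,v,0).\<close>
definition dq_dom :: "('r::comm_ring_1 \<Rightarrow> 'e::ab_group_add \<Rightarrow> 'e) \<Rightarrow> 'e set \<Rightarrow> ('e \<times> 'e \<times> 'r) set" where
  "dq_dom s D = {(x, v, t). x \<in> D \<and> x + s t v \<in> D}"

definition dq_witness :: "('r::{comm_ring_1,topological_space} \<Rightarrow> 'e::{ab_group_add,topological_space} \<Rightarrow> 'e) \<Rightarrow>
     ('r \<Rightarrow> 'f::{ab_group_add,topological_space} \<Rightarrow> 'f) \<Rightarrow> 'e set \<Rightarrow> ('e \<Rightarrow> 'f) \<Rightarrow> ('e \<times> 'e \<times> 'r \<Rightarrow> 'f) \<Rightarrow> bool" where
  "dq_witness s sc D g g1 \<longleftrightarrow> continuous_on (dq_dom s D) g1 \<and>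
     (\<forall>x v t. (x, v, t) \<in> dq_dom s D \<and> is_unit t \<longrightarrow> g (x + s t v) - g x = sc t (g1 (x, v, t)))"

definition dfun :: "('r::{comm_ring_1,topological_space} \<Rightarrow> 'e::{ab_group_add,topological_space} \<Rightarrow> 'e) \<Rightarrow>
     ('r \<Rightarrow> 'f::{ab_group_add,topological_space} \<Rightarrow> 'f) \<Rightarrow> 'e set \<Rightarrow> ('e \<Rightarrow> 'f) \<Rightarrow> 'e \<Rightarrow> 'e \<Rightarrow> 'f" where
  "dfun s sc D g x v = (THE w. \<forall>g1. dq_witness s sc D g g1 \<longrightarrow> g1 (x, v, 0) = w)"

text \<open>Higher derivatives d^k g(x)(v_1,...,v_k) (arguments as a list of length k).\<close>
fun dk :: "('r::{comm_ring_1,topological_space} \<Rightarrow> 'e::{ab_group_add,topological_space} \<Rightarrow> 'e) \<Rightarrow>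
     ('r \<Rightarrow> 'f::{ab_group_add,topological_space} \<Rightarrow> 'f) \<Rightarrow> 'e set \<Rightarrow> ('e \<Rightarrow> 'f) \<Rightarrow> nat \<Rightarrow> 'e \<Rightarrow> 'e list \<Rightarrow> 'f" where
  "dk s sc D g 0 x vs = g x"
| "dk s sc D g (Suc k) x vs = dfun s sc D (\<lambda>y. dk s sc D g k y (take k vs)) x (vs ! k)"

text \<open>Elements of \<lambda>^\<infinity> (resp. E \<otimes> \<lambda>^\<infinity>) are coefficient functions I \<mapsto> coefficient of
\<theta>_I, I a finite set of generator indices (generators indexed by nat), supported in
some \<lambda>^N, i.e. on subsets of {..<N}.  E = E0 \<times> E1.\<close>

definition sv_space :: "(nat set \<Rightarrow> 'm::zero) set" where
  "sv_space = {v. \<exists>N. \<forall>I. \<not> I \<subseteq> {..<N} \<longrightarrow> v I = 0}"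

text \<open>Parity p of an element of E \<otimes> \<lambda>: e \<theta>_I has parity |e| + |I|.\<close>
definition sv_par :: "nat \<Rightarrow> (nat set \<Rightarrow> 'a::zero \<times> 'b::zero) \<Rightarrow> bool" where
  "sv_par p v \<longleftrightarrow> (\<forall>I. if even (card I + p) then snd (v I) = 0 else fst (v I) = 0)"

definition lam_par :: "nat \<Rightarrow> (nat set \<Rightarrow> 'r::zero) \<Rightarrow> bool" where
  "lam_par p a \<longleftrightarrow> (\<forall>I. a I \<noteq> 0 \<longrightarrow> card I mod 2 = p mod 2)"

text \<open>E_\<infinity> = (E \<otimes> \<lambda>^\<infinity>)_0\<close>
definition sv_even :: "(nat set \<Rightarrow> 'a::zero \<times> 'b::zero) set" where
  "sv_even = {v \<in> sv_space. sv_par 0 v}"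

definition body :: "(nat set \<Rightarrow> 'm) \<Rightarrow> 'm" where
  "body v = v {}"

definition emb :: "'m::zero \<Rightarrow> (nat set \<Rightarrow> 'm)" where
  "emb e = (\<lambda>I. if I = {} then e else 0)"

text \<open>Sign of \<theta>_J \<theta>_L = (-1)^(gsgn J L) \<theta>_(J \<union> L) for disjoint J, L.\<close>
definition gsgn :: "nat set \<Rightarrow> nat set \<Rightarrow> nat" where
  "gsgn J L = card {(j, l). j \<in> J \<and> l \<in> L \<and> l < j}"

text \<open>Left action of \<lambda>^\<infinity> on E \<otimes> \<lambda>^\<infinity>:  \<theta>_J (e \<theta>_L) = (-1)^(|J||e|) e \<theta>_J \<theta>_L.\<close>
definition lact :: "('r::comm_ring_1 \<Rightarrow> 'a::ab_group_add \<Rightarrow> 'a) \<Rightarrow> ('r \<Rightarrow> 'b::ab_group_add \<Rightarrow> 'b) \<Rightarrow>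
     (nat set \<Rightarrow> 'r) \<Rightarrow> (nat set \<Rightarrow> 'a \<times> 'b) \<Rightarrow> (nat set \<Rightarrow> 'a \<times> 'b)" where
  "lact sa sb a v = (\<lambda>K. \<Sum>J\<in>Pow K.
      (sa ((-1) ^ gsgn J (K - J) * a J) (fst (v (K - J))),
       sb ((-1) ^ gsgn J (K - J) * (-1) ^ card J * a J) (snd (v (K - J)))))"

definition rscale :: "('r \<Rightarrow> 'a \<Rightarrow> 'a) \<Rightarrow> ('r \<Rightarrow> 'b \<Rightarrow> 'b) \<Rightarrow> 'r \<Rightarrow> (nat set \<Rightarrow> 'a \<times> 'b) \<Rightarrow> (nat set \<Rightarrow> 'a \<times> 'b)" where
  "rscale sa sb t v = (\<lambda>I. (sa t (fst (v I)), sb t (snd (v I))))"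

text \<open>Even, \<lambda>^\<infinity>-multilinear, supersymmetric k-linear maps
(E \<otimes> \<lambda>^\<infinity>)^k \<rightarrow> F \<otimes> \<lambda>^\<infinity> mapping E^k into F (arguments as lists of length k).\<close>
definition even_ml_susy ::
  "('r::comm_ring_1 \<Rightarrow> 'a::ab_group_add \<Rightarrow> 'a) \<Rightarrow> ('r \<Rightarrow> 'b::ab_group_add \<Rightarrow> 'b) \<Rightarrow>
   ('r \<Rightarrow> 'c::ab_group_add \<Rightarrow> 'c) \<Rightarrow> ('r \<Rightarrow> 'd::ab_group_add \<Rightarrow> 'd) \<Rightarrow> nat \<Rightarrow>
   ((nat set \<Rightarrow> 'a \<times> 'b) list \<Rightarrow> (nat set \<Rightarrow> 'c \<times> 'd)) \<Rightarrow> bool" where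
  "even_ml_susy sa sb sc sd k m \<longleftrightarrow>
     (\<forall>vs. length vs = k \<and> set vs \<subseteq> sv_space \<longrightarrow> m vs \<in> sv_space) \<and>
     (\<forall>vs i u w. length vs = k \<and> set vs \<subseteq> sv_space \<and> i < k \<and> u \<in> sv_space \<and> w \<in> sv_space \<longrightarrow>
         m (vs[i := u + w]) = m (vs[i := u]) + m (vs[i := w])) \<and>
     (\<forall>vs ps. length vs = k \<and> length ps = k \<and> (\<forall>i<k. vs ! i \<in> sv_space \<and> sv_par (ps ! i) (vs ! i)) \<longrightarrow>
         sv_par (sum_list ps) (m vs)) \<and>
     (\<forall>vs ps i a q. length vs = k \<and> length ps = k \<and> (\<forall>j<k. vs ! j \<in> sv_space \<and> sv_par (ps ! j) (vs ! j)) \<and>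
         i < k \<and> a \<in> sv_space \<and> lam_par q a \<longrightarrow>
         m (vs[i := lact sa sb a (vs ! i)]) =
           lact sc sd (\<lambda>I. (-1) ^ (q * sum_list (take i ps)) * a I) (m vs)) \<and>
     (\<forall>vs ps i. length vs = k \<and> length ps = k \<and> (\<forall>j<k. vs ! j \<in> sv_space \<and> sv_par (ps ! j) (vs ! j)) \<and>
         Suc i < k \<longrightarrow>
         m (vs[i := vs ! Suc i, Suc i := vs ! i]) =
           (if odd (ps ! i) \<and> odd (ps ! Suc i) then - m vs else m vs)) \<and>
     (\<forall>es. length es = k \<longrightarrow> (\<exists>c. m (map emb es) = emb c))"

text \<open>Continuity of g : dom \<rightarrow> Y where dom \<subseteq> X and X, Y carry the initial topologies
of the maps bX, bY (DeWitt topologies).\<close>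
definition dw_cont :: "'x set \<Rightarrow> ('x \<Rightarrow> 'p::topological_space) \<Rightarrow> ('y \<Rightarrow> 'q::topological_space) \<Rightarrow> ('x \<Rightarrow> 'y) \<Rightarrow> bool" where
  "dw_cont D bX bY g \<longleftrightarrow> (\<forall>V. open V \<longrightarrow> (\<exists>W. open W \<and> {z \<in> D. bY (g z) \<in> V} = {z \<in> D. bX z \<in> W}))"

definition dw_open :: "(nat set \<Rightarrow> 'a::{zero,topological_space} \<times> 'b::zero) set \<Rightarrow> bool" where
  "dw_open U \<longleftrightarrow> (\<exists>W. open W \<and> U = {x \<in> sv_even. fst (body x) \<in> W})"

end

theory Submission
  imports Defs
begin

text \<open>Split \<open>y \<in> E\<^sub>\<infinity>\<^sup>+\<close> as \<open>y = a\<^sub>0 + \<dots> + a\<^sub>N\<^sub>-\<^sub>1\<close>, where \<open>a\<^sub>p\<close> collects the terms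
  of \<open>y\<close> whose least generator is \<open>\<theta>\<^sub>p\<close>, so that \<open>a\<^sub>p = \<theta>\<^sub>p b\<close> with \<open>b\<close> odd. Since
  \<open>\<theta>\<^sub>p\<^sup>2 = 0\<close>, an even supersymmetric \<open>\<lambda>\<^sup>\<infinity>\<close>-multilinear map vanishes as soon as \<open>a\<^sub>p\<close>
  occurs twice among its arguments. Hence, for \<open>Y\<^sub>n = a\<^sub>0 + \<dots> + a\<^sub>n\<^sub>-\<^sub>1\<close>, the map
  \<open>f\<^sup>(\<^sup>k\<^sup>)(x)\<close> vanishes on more than \<open>n\<close> copies of \<open>Y\<^sub>n\<close>, and replacing \<open>Y\<^sub>n\<close> by
  \<open>Y\<^sub>n\<^sub>+\<^sub>1\<close> expands binomially up to first order in \<open>a\<^sub>n\<close>. Together with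
  \<open>f\<^sup>(\<^sup>k\<^sup>+\<^sup>1\<^sup>)(x)(a, v) = f\<^sup>(\<^sup>k\<^sup>)(x + a)(v) - f\<^sup>(\<^sup>k\<^sup>)(x)(v)\<close> this yields, by induction on \<open>n\<close>,
  \<open>f\<^sup>(\<^sup>k\<^sup>)(x + Y\<^sub>n)(v) = \<Sum>\<^sub>j\<^sub>\<le>\<^sub>n f\<^sup>(\<^sup>k\<^sup>+\<^sup>j\<^sup>)(x)(Y\<^sub>n, \<dots>, Y\<^sub>n, v) / j!\<close>; the case \<open>k = 0\<close>,
  \<open>n = N\<close> is the claim. Only the algebraic hypotheses enter the argument.\<close>

lemma rscale_add_right:
  assumes "module sc" "module sd"
  shows "rscale sc sd c (u + v) = rscale sc sd c u + rscale sc sd c v"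
  using module.scale_right_distrib[OF assms(1)] module.scale_right_distrib[OF assms(2)]
  by (simp add: rscale_def fun_eq_iff)

lemma rscale_add_left:
  assumes "module sc" "module sd"
  shows "rscale sc sd (s + t) w = rscale sc sd s w + rscale sc sd t w"
  using module.scale_left_distrib[OF assms(1)] module.scale_left_distrib[OF assms(2)]
  by (simp add: rscale_def fun_eq_iff)

lemma rscale_scale:
  assumes "module sc" "module sd"
  shows "rscale sc sd s (rscale sc sd t w) = rscale sc sd (s * t) w"
  using module.scale_scale[OF assms(1)] module.scale_scale[OF assms(2)]
  by (simp add: rscale_def fun_eq_iff)

lemma rscale_one:
  assumes "module sc" "module sd"
  shows "rscale sc sd 1 w = w"
  using module.scale_one[OF assms(1)] module.scale_one[OF assms(2)]
  by (simp add: rscale_def fun_eq_iff)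

lemma rscale_zero_left:
  assumes "module sc" "module sd"
  shows "rscale sc sd 0 w = 0"
  using module.scale_zero_left[OF assms(1)] module.scale_zero_left[OF assms(2)]
  by (simp add: rscale_def fun_eq_iff zero_prod_def)

lemma rscale_zero_right:
  assumes "module sc" "module sd"
  shows "rscale sc sd c 0 = 0"
  using module.scale_zero_right[OF assms(1)] module.scale_zero_right[OF assms(2)]
  by (simp add: rscale_def fun_eq_iff zero_prod_def)

lemma rinv_eq:
  assumes "of_nat n * u = (1::'r::comm_ring_1)"
  shows "rinv n = u"
proof -
  have "\<exists>!u. of_nat n * u = (1::'r)"
    using assms by (metis mult.left_commute mult_1_right)
  then show ?thesis
    unfolding rinv_def using assms by (rule the1_equality)
qed

lemma rinv_fact_0: "rinv (fact 0) = (1::'r::comm_ring_1)"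
  by (rule rinv_eq) simp

lemma rinv_fact_Suc:
  assumes "of_nat (fact (Suc i)) * u = (1::'r::comm_ring_1)"
  shows "rinv (fact (Suc i)) * of_nat (Suc i) = (rinv (fact i) :: 'r)"
proof -
  have "of_nat (fact i) * (u * of_nat (Suc i)) = (1::'r)"
    using assms by (simp add: algebra_simps)
  then show ?thesis
    using rinv_eq[OF assms] by (simp add: rinv_eq)
qed

lemma sv_space_infinite_zero: "v \<in> sv_space \<Longrightarrow> infinite I \<Longrightarrow> v I = 0"
  unfolding sv_space_def using finite_subset by blast

lemma sv_even_zero: "0 \<in> sv_even"
  by (auto simp: sv_even_def sv_space_def sv_par_def)

lemma sv_even_add:
  fixes v w :: "nat set \<Rightarrow> 'a::ab_group_add \<times> 'b::ab_group_add"
  assumes "v \<in> sv_even" "w \<in> sv_even"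
  shows "v + w \<in> sv_even"
proof -
  from assms obtain N M where "\<forall>I. \<not> I \<subseteq> {..<N} \<longrightarrow> v I = 0" "\<forall>I. \<not> I \<subseteq> {..<M} \<longrightarrow> w I = 0"
    by (auto simp: sv_even_def sv_space_def)
  then have "\<forall>I. \<not> I \<subseteq> {..<max N M} \<longrightarrow> (v + w) I = 0"
    by (metis add.right_neutral plus_fun_apply subset_trans lessThan_subset_iff max.cobounded1 max.cobounded2)
  moreover have "sv_par 0 (v + w)"
    using assms by (auto simp: sv_even_def sv_par_def)
  ultimately show ?thesis
    by (auto simp: sv_even_def sv_space_def)
qed

lemma sv_even_sum:
  fixes v :: "'i \<Rightarrow> nat set \<Rightarrow> 'a::ab_group_add \<times> 'b::ab_group_add"
  shows "(\<And>i. i \<in> A \<Longrightarrow> v i \<in> sv_even) \<Longrightarrow> (\<Sum>i\<in>A. v i) \<in> sv_even"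
  by (induction A rule: infinite_finite_induct) (auto intro: sv_even_zero sv_even_add)

lemma sv_even_restrict: "y \<in> sv_even \<Longrightarrow> (\<lambda>I. if P I then y I else 0) \<in> sv_even"
  by (auto simp: sv_even_def sv_space_def sv_par_def)

definition theta :: "nat \<Rightarrow> nat set \<Rightarrow> 'r::comm_ring_1" where
  "theta p = (\<lambda>I. if I = {p} then 1 else 0)"

lemma theta_sv_space: "theta p \<in> sv_space"
  unfolding sv_space_def theta_def by (auto intro!: exI[of _ "Suc p"])

lemma theta_odd: "lam_par 1 (theta p)"
  unfolding lam_par_def theta_def by auto

lemma lact_theta:
  assumes "module sa" "module sb"
  shows "lact sa sb (theta p) w K = (if finite K \<and> p \<in> K then
     (sa ((-1) ^ gsgn {p} (K - {p})) (fst (w (K - {p}))),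
      sb ((-1) ^ gsgn {p} (K - {p}) * (-1)) (snd (w (K - {p})))) else 0)"
proof (cases "finite K")
  case True
  have "lact sa sb (theta p) w K = (\<Sum>J\<in>Pow K. if J = {p} then
      (sa ((-1) ^ gsgn {p} (K - {p})) (fst (w (K - {p}))),
       sb ((-1) ^ gsgn {p} (K - {p}) * (-1)) (snd (w (K - {p})))) else 0)"
    unfolding lact_def
    by (intro sum.cong refl)
      (simp add: theta_def module.scale_zero_left[OF assms(1)] module.scale_zero_left[OF assms(2)] zero_prod_def)
  with True show ?thesis
    by simp
qed (simp add: lact_def)

lemma lact_theta_theta:
  assumes "module sa" "module sb"
  shows "lact sa sb (theta p) (lact sa sb (theta p) w) = 0"
  using module.scale_zero_right[OF assms(1)] module.scale_zero_right[OF assms(2)]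
  by (simp add: fun_eq_iff lact_theta[OF assms] zero_prod_def)

definition theta_multiple :: "nat \<Rightarrow> (nat set \<Rightarrow> 'a::zero \<times> 'b::zero) \<Rightarrow> bool" where
  "theta_multiple p a \<longleftrightarrow> a \<in> sv_even \<and> (\<forall>I. p \<notin> I \<longrightarrow> a I = 0)"

lemma theta_multiple_body: "theta_multiple p a \<Longrightarrow> body a = 0"
  by (simp add: theta_multiple_def body_def)

definition theta_quotient ::
  "('r::comm_ring_1 \<Rightarrow> 'a::ab_group_add \<Rightarrow> 'a) \<Rightarrow> ('r \<Rightarrow> 'b::ab_group_add \<Rightarrow> 'b) \<Rightarrow> nat \<Rightarrow>
   (nat set \<Rightarrow> 'a \<times> 'b) \<Rightarrow> nat set \<Rightarrow> 'a \<times> 'b" where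
  "theta_quotient sa sb p a = (\<lambda>I. if p \<notin> I then
      (sa ((-1) ^ gsgn {p} I) (fst (a (insert p I))),
       sb ((-1) ^ gsgn {p} I * (-1)) (snd (a (insert p I)))) else 0)"

lemma theta_quotient_sv_space:
  assumes "module sa" "module sb" and "a \<in> sv_space"
  shows "theta_quotient sa sb p a \<in> sv_space"
proof -
  obtain N where "\<forall>I. \<not> I \<subseteq> {..<N} \<longrightarrow> a I = 0"
    using assms(3) by (auto simp: sv_space_def)
  then have "\<forall>I. \<not> I \<subseteq> {..<N} \<longrightarrow> theta_quotient sa sb p a I = 0"
    using module.scale_zero_right[OF assms(1)] module.scale_zero_right[OF assms(2)]
    by (auto simp: theta_quotient_def zero_prod_def)
  then show ?thesis
    by (auto simp: sv_space_def)
qed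

lemma theta_quotient_odd:
  assumes "module sa" "module sb" and a: "a \<in> sv_even"
  shows "sv_par 1 (theta_quotient sa sb p a)"
  unfolding sv_par_def
proof
  fix I
  have par: "if even (card (insert p I)) then snd (a (insert p I)) = 0 else fst (a (insert p I)) = 0"
    using a by (simp add: sv_even_def sv_par_def)
  have "a (insert p I) = 0" if "infinite I"
    using a that by (simp add: sv_even_def sv_space_infinite_zero)
  with par show "if even (card I + 1) then snd (theta_quotient sa sb p a I) = 0
      else fst (theta_quotient sa sb p a I) = 0"
    using module.scale_zero_right[OF assms(1)] module.scale_zero_right[OF assms(2)]
    by (cases "finite I") (auto simp: theta_quotient_def zero_prod_def)
qed

lemma lact_theta_quotient:
  assumes ms: "module sa" "module sb" and "theta_multiple p a"
  shows "lact sa sb (theta p) (theta_quotient sa sb p a) = a"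
proof
  fix K
  have a: "a \<in> sv_space" "\<forall>I. p \<notin> I \<longrightarrow> a I = 0"
    using assms(3) by (auto simp: theta_multiple_def sv_even_def)
  show "lact sa sb (theta p) (theta_quotient sa sb p a) K = a K"
  proof (cases "finite K \<and> p \<in> K")
    case True
    then have "insert p (K - {p}) = K" by auto
    then show ?thesis
      using True by (simp add: lact_theta[OF ms] theta_quotient_def power_add[symmetric]
          module.scale_scale[OF ms(1)] module.scale_scale[OF ms(2)]
          module.scale_one[OF ms(1)] module.scale_one[OF ms(2)])
  next
    case False
    then show ?thesis
      using a sv_space_infinite_zero by (auto simp: lact_theta[OF ms])
  qed
qed

lemma theta_multiple_factor:
  assumes "module sa" "module sb" and "theta_multiple p a"
  obtains b where "b \<in> sv_space" "sv_par 1 b" "lact sa sb (theta p) b = a"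
proof (rule that)
  have a: "a \<in> sv_even"
    using assms(3) by (simp add: theta_multiple_def)
  then show "theta_quotient sa sb p a \<in> sv_space"
    by (intro theta_quotient_sv_space[OF assms(1,2)]) (simp add: sv_even_def)
  show "sv_par 1 (theta_quotient sa sb p a)"
    by (rule theta_quotient_odd[OF assms(1,2) a])
  show "lact sa sb (theta p) (theta_quotient sa sb p a) = a"
    by (rule lact_theta_quotient[OF assms])
qed

definition min_layer :: "(nat set \<Rightarrow> 'm::zero) \<Rightarrow> nat \<Rightarrow> nat set \<Rightarrow> 'm" where
  "min_layer y p = (\<lambda>I. if p \<in> I \<and> (\<forall>q\<in>I. p \<le> q) then y I else 0)"

lemma theta_multiple_min_layer: "y \<in> sv_even \<Longrightarrow> theta_multiple p (min_layer y p)"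
  unfolding theta_multiple_def min_layer_def by (simp add: sv_even_restrict)

lemma sum_min_layer_lessThan:
  fixes y :: "nat set \<Rightarrow> 'm::comm_monoid_add"
  shows "(\<Sum>p<N. min_layer y p) = (\<lambda>I. if \<exists>q\<in>I. q < N then y I else 0)"
proof (induction N)
  case (Suc N)
  show ?case
    unfolding sum.lessThan_Suc Suc.IH
    by (auto simp: fun_eq_iff min_layer_def less_Suc_eq dest: leD)
qed (simp add: fun_eq_iff)

lemma sum_min_layer_eq:
  fixes y :: "nat set \<Rightarrow> 'm::comm_monoid_add"
  assumes "y \<in> sv_space" "body y = 0"
  obtains N where "y = (\<Sum>p<N. min_layer y p)"
proof -
  obtain N where N: "\<forall>I. \<not> I \<subseteq> {..<N} \<longrightarrow> y I = 0"
    using assms(1) by (auto simp: sv_space_def)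
  have "y I = 0" if "\<not> (\<exists>q\<in>I. q < N)" for I
    using N assms(2) that by (cases "I = {}") (auto simp: body_def)
  then have "y = (\<Sum>p<N. min_layer y p)"
    by (auto simp: sum_min_layer_lessThan fun_eq_iff)
  then show ?thesis
    by (rule that)
qed

lemma even_ml_susy_add:
  assumes "even_ml_susy sa sb sc sd k m" "length vs = k" "set vs \<subseteq> sv_space" "i < k"
    "u \<in> sv_space" "w \<in> sv_space"
  shows "m (vs[i := u + w]) = m (vs[i := u]) + m (vs[i := w])"
  using assms unfolding even_ml_susy_def by blast

lemma even_ml_susy_lact:
  assumes "even_ml_susy sa sb sc sd k m" "length vs = k" "length ps = k"
    "\<forall>j<k. vs ! j \<in> sv_space \<and> sv_par (ps ! j) (vs ! j)" "i < k" "a \<in> sv_space" "lam_par q a"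
  shows "m (vs[i := lact sa sb a (vs ! i)]) =
    lact sc sd (\<lambda>I. (-1) ^ (q * sum_list (take i ps)) * a I) (m vs)"
  using assms unfolding even_ml_susy_def by blast

lemma even_ml_susy_swap_even:
  assumes E: "even_ml_susy sa sb sc sd k m" and "length vs = k" "set vs \<subseteq> sv_even" "Suc i < k"
  shows "m (vs[i := vs ! Suc i, Suc i := vs ! i]) = m vs"
proof -
  have even: "\<forall>j<k. vs ! j \<in> sv_space \<and> sv_par (replicate k 0 ! j) (vs ! j)"
    using assms(2,3) by (auto simp: sv_even_def dest!: nth_mem)
  have "\<forall>vs ps i. length vs = k \<and> length ps = k \<and>
      (\<forall>j<k. vs ! j \<in> sv_space \<and> sv_par (ps ! j) (vs ! j)) \<and> Suc i < k \<longrightarrow>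
      m (vs[i := vs ! Suc i, Suc i := vs ! i]) = (if odd (ps ! i) \<and> odd (ps ! Suc i) then - m vs else m vs)"
    using E unfolding even_ml_susy_def by blast
  from this[rule_format, of vs "replicate k 0" i] show ?thesis
    using even assms(2,4) by simp
qed

lemma even_ml_susy_zero_arg:
  assumes E: "even_ml_susy sa sb sc sd k m" and "length vs = k" "set vs \<subseteq> sv_space" "i < k"
    and "vs ! i = 0"
  shows "m vs = 0"
proof -
  have vs_i: "vs ! i \<in> sv_space"
    using assms(2-4) by (auto dest!: nth_mem)
  have "m (vs[i := vs ! i + vs ! i]) = m (vs[i := vs ! i]) + m (vs[i := vs ! i])"
    by (rule even_ml_susy_add[OF assms(1-4) vs_i vs_i])
  then show ?thesis
    using assms(5) list_update_id[of vs i] by simp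
qed

text \<open>Writing \<open>a = \<theta>\<^sub>p b\<close> with \<open>b\<close> odd, both copies of \<open>\<theta>\<^sub>p\<close> can be pulled out of \<open>m\<close>,
  and \<open>\<theta>\<^sub>p\<^sup>2 = 0\<close>.\<close>
lemma even_ml_susy_theta_multiple_twice:
  assumes ms: "module sa" "module sb" "module sc" "module sd"
    and E: "even_ml_susy sa sb sc sd k m" and l: "length vs = k" and s: "set vs \<subseteq> sv_even"
    and i: "Suc i < k" and a: "theta_multiple p a" and va: "vs ! i = a" "vs ! Suc i = a"
  shows "m vs = 0"
proof -
  obtain b where b: "b \<in> sv_space" "sv_par 1 b" "lact sa sb (theta p) b = a"
    using theta_multiple_factor[OF ms(1,2) a] .
  have evsp: "\<And>j. j < k \<Longrightarrow> vs ! j \<in> sv_space \<and> sv_par 0 (vs ! j)"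
    using s l by (auto simp: sv_even_def dest!: nth_mem)
  define V1 where "V1 = vs[Suc i := b]"
  define ps1 where "ps1 = (replicate k (0::nat))[Suc i := 1]"
  have h1: "\<forall>j<k. V1 ! j \<in> sv_space \<and> sv_par (ps1 ! j) (V1 ! j)"
    using evsp b l i by (auto simp: V1_def ps1_def nth_list_update)
  have "m (V1[Suc i := lact sa sb (theta p) (V1 ! Suc i)]) =
      lact sc sd (\<lambda>I. (-1) ^ (1 * sum_list (take (Suc i) ps1)) * theta p I) (m V1)"
    by (rule even_ml_susy_lact[OF E _ _ h1 i theta_sv_space theta_odd])
      (use l in \<open>simp_all add: V1_def ps1_def\<close>)
  moreover have "V1[Suc i := lact sa sb (theta p) (V1 ! Suc i)] = vs"
    using b(3) va l i by (simp add: V1_def list_update_same_conv)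
  moreover have "take (Suc i) ps1 = replicate (Suc i) 0"
    using i by (simp add: ps1_def take_update_cancel)
  ultimately have m_vs: "m vs = lact sc sd (theta p) (m V1)"
    by (simp add: sum_list_replicate)
  define V2 where "V2 = V1[i := b]"
  define ps2 where "ps2 = ps1[i := 1]"
  have h2: "\<forall>j<k. V2 ! j \<in> sv_space \<and> sv_par (ps2 ! j) (V2 ! j)"
    using h1 b l i by (auto simp: V2_def ps2_def nth_list_update V1_def ps1_def)
  have "m (V2[i := lact sa sb (theta p) (V2 ! i)]) =
      lact sc sd (\<lambda>I. (-1) ^ (1 * sum_list (take i ps2)) * theta p I) (m V2)"
    by (rule even_ml_susy_lact[OF E _ _ h2 _ theta_sv_space theta_odd])
      (use l i in \<open>simp_all add: V2_def V1_def ps2_def ps1_def\<close>)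
  moreover have "V2[i := lact sa sb (theta p) (V2 ! i)] = V1"
    using b(3) va l i list_update_id[of vs i]
    by (simp add: V2_def V1_def list_update_swap)
  moreover have "take i ps2 = replicate i 0"
    using i by (simp add: ps2_def ps1_def take_update_cancel)
  ultimately have "m V1 = lact sc sd (theta p) (m V2)"
    by (simp add: sum_list_replicate)
  with m_vs show ?thesis
    using lact_theta_theta[OF ms(3,4)] by simp
qed

lemma even_ml_susy_binomial:
  fixes z a :: "nat set \<Rightarrow> 'a::ab_group_add \<times> 'b::ab_group_add"
  assumes ms: "module sa" "module sb" "module sc" "module sd"
    and E: "even_ml_susy sa sb sc sd K m"
    and z: "z \<in> sv_even" and a: "theta_multiple p a"
    and "length vs + j = K" "set vs \<subseteq> sv_even"
  shows "m (replicate j (z + a) @ vs) =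
    m (replicate j z @ vs) + rscale sc sd (of_nat j) (m (replicate (j - 1) z @ a # vs))"
  using assms(8,9)
proof (induction j arbitrary: vs)
  case 0
  then show ?case by (simp add: rscale_zero_left[OF ms(3,4)])
next
  case (Suc j)
  have a_even: "a \<in> sv_even"
    using a by (simp add: theta_multiple_def)
  have za: "z + a \<in> sv_even"
    using sv_even_add[OF z a_even] .
  have sp: "z \<in> sv_space" "a \<in> sv_space"
    using z a_even by (auto simp: sv_even_def)
  have IH: "m (replicate j (z + a) @ (z + a) # vs) = m (replicate j z @ (z + a) # vs)
      + rscale sc sd (of_nat j) (m (replicate (j - 1) z @ a # (z + a) # vs))"
    using Suc.prems za by (intro Suc.IH) auto
  have split_last: "m (replicate j z @ (z + a) # vs) = m (replicate (Suc j) z @ vs) + m (replicate j z @ a # vs)"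
  proof -
    define L where "L = replicate j z @ z # vs"
    have L_upd: "\<And>u. L[j := u] = replicate j z @ u # vs"
      unfolding L_def by (metis length_replicate list_update_length)
    have "m (L[j := z + a]) = m (L[j := z]) + m (L[j := a])"
      by (rule even_ml_susy_add[OF E]) (use Suc.prems z sp in \<open>auto simp: L_def sv_even_def\<close>)
    then show ?thesis
      by (simp add: L_upd replicate_app_Cons_same)
  qed
  have move_a: "rscale sc sd (of_nat j) (m (replicate (j - 1) z @ a # (z + a) # vs))
      = rscale sc sd (of_nat j) (m (replicate j z @ a # vs))"
  proof (cases j)
    case 0
    then show ?thesis by (simp add: rscale_zero_left[OF ms(3,4)])
  next
    case (Suc j')
    define L where "L = replicate j' z @ a # z # vs"
    have "m (L[Suc j' := z + a]) = m (L[Suc j' := z]) + m (L[Suc j' := a])"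
      by (rule even_ml_susy_add[OF E])
        (use Suc.prems \<open>j = Suc j'\<close> z sp in \<open>auto simp: L_def sv_even_def\<close>)
    moreover have "m (L[Suc j' := a]) = 0"
      by (rule even_ml_susy_theta_multiple_twice[OF ms E _ _ _ a, of _ j'])
        (use Suc.prems \<open>j = Suc j'\<close> z a_even in \<open>auto simp: L_def nth_append list_update_append\<close>)
    moreover have "m (L[Suc j' := z]) = m (replicate j z @ a # vs)"
    proof -
      define L2 where "L2 = replicate j' z @ z # a # vs"
      have "m (L2[j' := L2 ! Suc j', Suc j' := L2 ! j']) = m L2"
        by (rule even_ml_susy_swap_even[OF E])
          (use Suc.prems \<open>j = Suc j'\<close> z a_even in \<open>auto simp: L2_def\<close>)
      moreover have "L2[j' := L2 ! Suc j', Suc j' := L2 ! j'] = L[Suc j' := z]"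
        by (simp add: L2_def L_def nth_append list_update_append del: replicate_app_Cons_same)
      moreover have "L2 = replicate j z @ a # vs"
        using \<open>j = Suc j'\<close> by (simp add: L2_def replicate_append_same)
      ultimately show ?thesis by simp
    qed
    ultimately show ?thesis
      using \<open>j = Suc j'\<close> by (simp add: L_def list_update_append)
  qed
  have "m (replicate (Suc j) (z + a) @ vs) = m (replicate j (z + a) @ (z + a) # vs)"
    by (simp add: replicate_app_Cons_same)
  also have "\<dots> = m (replicate (Suc j) z @ vs)
      + rscale sc sd (1 + of_nat j) (m (replicate j z @ a # vs))"
    using IH split_last move_a
    by (simp add: add.assoc rscale_add_left[OF ms(3,4)] rscale_one[OF ms(3,4)])
  finally show ?case
    by (simp only: diff_Suc_1 of_nat_Suc)
qed

locale grassmann_taylor =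
  fixes sa :: "'r::comm_ring_1 \<Rightarrow> 'a::ab_group_add \<Rightarrow> 'a"
    and sb :: "'r \<Rightarrow> 'b::ab_group_add \<Rightarrow> 'b"
    and sc :: "'r \<Rightarrow> 'c::ab_group_add \<Rightarrow> 'c"
    and sd :: "'r \<Rightarrow> 'd::ab_group_add \<Rightarrow> 'd"
    and U :: "(nat set \<Rightarrow> 'a \<times> 'b) set"
    and fk :: "nat \<Rightarrow> (nat set \<Rightarrow> 'a \<times> 'b) \<Rightarrow> (nat set \<Rightarrow> 'a \<times> 'b) list \<Rightarrow> (nat set \<Rightarrow> 'c \<times> 'd)"
  assumes modules: "module sa" "module sb" "module sc" "module sd"
    and rational: "\<And>n. n > 0 \<Longrightarrow> \<exists>u::'r. of_nat n * u = 1"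
    and U_add_theta_multiple: "\<And>x p a. x \<in> U \<Longrightarrow> theta_multiple p a \<Longrightarrow> x + a \<in> U"
    and fk_even_ml_susy: "\<And>k x. k \<ge> 1 \<Longrightarrow> x \<in> U \<Longrightarrow> even_ml_susy sa sb sc sd k (fk k x)"
    and fk_Suc: "\<And>k p x a vs. x \<in> U \<Longrightarrow> theta_multiple p a \<Longrightarrow> length vs = k \<Longrightarrow>
      set vs \<subseteq> sv_even \<Longrightarrow> fk (Suc k) x (a # vs) = fk k (x + a) vs - fk k x vs"
begin

abbreviation rscale_F :: "'r \<Rightarrow> (nat set \<Rightarrow> 'c \<times> 'd) \<Rightarrow> nat set \<Rightarrow> 'c \<times> 'd" where
  "rscale_F \<equiv> rscale sc sd"

lemma U_add_sum_theta_multiples: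
  fixes n :: nat and a :: "nat \<Rightarrow> nat set \<Rightarrow> 'a \<times> 'b"
  assumes "\<And>i. i < n \<Longrightarrow> theta_multiple (p i) (a i)" "x \<in> U"
  shows "x + (\<Sum>i<n. a i) \<in> U"
  using assms
proof (induction n)
  case (Suc n)
  have "x + (\<Sum>i<n. a i) \<in> U"
    by (rule Suc.IH) (use Suc.prems in auto)
  from U_add_theta_multiple[OF this Suc.prems(1)[OF lessI]] show ?case
    by (simp only: sum.lessThan_Suc add.assoc)
qed simp

lemma sv_even_sum_theta_multiples:
  fixes n :: nat and a :: "nat \<Rightarrow> nat set \<Rightarrow> 'a \<times> 'b"
  assumes "\<And>i. i < n \<Longrightarrow> theta_multiple (p i) (a i)"
  shows "(\<Sum>i<n. a i) \<in> sv_even"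
  by (rule sv_even_sum) (use assms in \<open>auto simp: theta_multiple_def\<close>)

lemma fk_binomial:
  assumes "x \<in> U" "length vs = k" "set vs \<subseteq> sv_even" "z \<in> sv_even" "theta_multiple p a"
  shows "fk (k + j) x (replicate j (z + a) @ vs) =
    fk (k + j) x (replicate j z @ vs) + rscale_F (of_nat j) (fk (k + j) x (replicate (j - 1) z @ a # vs))"
proof (cases j)
  case 0
  then show ?thesis by (simp add: rscale_zero_left[OF modules(3,4)])
next
  case (Suc j')
  then have "even_ml_susy sa sb sc sd (k + j) (fk (k + j) x)"
    using fk_even_ml_susy assms(1) by simp
  then show ?thesis
    using assms(2-) by (intro even_ml_susy_binomial[OF modules]) auto
qed

text \<open>Every product of \<open>j > n\<close> copies of a sum of \<open>n\<close> elements of the ideals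
  \<open>\<lambda>\<^sup>\<infinity>\<theta>\<^sub>p\<close> repeats some summand, hence vanishes.\<close>
lemma fk_power_sum_theta_multiples_zero:
  fixes n :: nat and a :: "nat \<Rightarrow> nat set \<Rightarrow> 'a \<times> 'b"
  assumes "\<And>i. i < n \<Longrightarrow> theta_multiple (p i) (a i)"
    and "x \<in> U" "n < j" "length vs = k" "set vs \<subseteq> sv_even"
  shows "fk (k + j) x (replicate j (\<Sum>i<n. a i) @ vs) = 0"
  using assms
proof (induction n arbitrary: j k vs)
  case 0
  then have "even_ml_susy sa sb sc sd (k + j) (fk (k + j) x)"
    using fk_even_ml_susy by simp
  then show ?case
    by (rule even_ml_susy_zero_arg[of _ _ _ _ _ _ _ 0])
      (use 0 in \<open>auto simp: sv_even_def sv_space_def nth_append\<close>)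
next
  case (Suc n)
  let ?Y = "\<Sum>i<n. a i"
  have a: "theta_multiple (p n) (a n)" and Y: "?Y \<in> sv_even"
    using Suc.prems(1) sv_even_sum_theta_multiples[of n p a] by auto
  have "fk (k + j) x (replicate j (?Y + a n) @ vs) =
    fk (k + j) x (replicate j ?Y @ vs) + rscale_F (of_nat j) (fk (Suc k + (j - 1)) x (replicate (j - 1) ?Y @ a n # vs))"
    using fk_binomial[OF Suc.prems(2,4,5) Y a] Suc.prems(3) by simp
  moreover have "fk (k + j) x (replicate j ?Y @ vs) = 0"
    by (rule Suc.IH) (use Suc.prems in auto)
  moreover have "fk (Suc k + (j - 1)) x (replicate (j - 1) ?Y @ a n # vs) = 0"
    by (rule Suc.IH) (use Suc.prems a in \<open>auto simp: theta_multiple_def\<close>)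
  moreover have "Suc k + (j - 1) = k + j"
    using Suc.prems(3) by simp
  ultimately show ?case
    by (simp only: sum.lessThan_Suc rscale_zero_right[OF modules(3,4)] add_0_right)
qed

text \<open>Term-by-term differentiation of the exponential series:
  \<open>\<Sum>\<^sub>j g\<^sub>j/j! = \<Sum>\<^sub>j j g\<^sub>j\<^sub>-\<^sub>1/j!\<close>.\<close>
lemma sum_rinv_fact_shift:
  "(\<Sum>j\<le>n. rscale_F (rinv (fact j)) (g j)) =
    (\<Sum>j\<le>Suc n. rscale_F (rinv (fact j)) (rscale_F (of_nat j) (g (j - 1))))"
proof -
  have "rinv (fact (Suc j)) * of_nat (Suc j) = (rinv (fact j) :: 'r)" for j
    using rational[of "fact (Suc j)"] rinv_fact_Suc by force
  then show ?thesis
    unfolding sum.atMost_Suc_shift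
    by (simp add: rscale_zero_left[OF modules(3,4)] rscale_zero_right[OF modules(3,4)]
        rscale_scale[OF modules(3,4)] del: fact_Suc of_nat_Suc)
qed

lemma fk_taylor_sum_theta_multiples:
  fixes n :: nat and a :: "nat \<Rightarrow> nat set \<Rightarrow> 'a \<times> 'b"
  assumes "\<And>i. i < n \<Longrightarrow> theta_multiple (p i) (a i)"
    and "x \<in> U" "length vs = k" "set vs \<subseteq> sv_even"
  shows "fk k (x + (\<Sum>i<n. a i)) vs =
    (\<Sum>j\<le>n. rscale_F (rinv (fact j)) (fk (k + j) x (replicate j (\<Sum>i<n. a i) @ vs)))"
  using assms
proof (induction n arbitrary: k vs)
  case 0
  then show ?case
    using rinv_fact_0[where 'r = 'r] by (simp add: rscale_one[OF modules(3,4)])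
next
  case (Suc n)
  let ?Y = "\<Sum>i<n. a i"
  let ?R = "\<lambda>j. rscale_F (rinv (fact j))"
  define P where "P j = fk (k + j) x (replicate j ?Y @ vs)" for j
  define Q where "Q j = fk (k + j) x (replicate (j - 1) ?Y @ a n # vs)" for j
  have a: "theta_multiple (p n) (a n)"
    using Suc.prems(1) by simp
  have Y: "?Y \<in> sv_even"
    by (rule sv_even_sum_theta_multiples[of n p]) (use Suc.prems(1) in simp)
  have xY: "x + ?Y \<in> U"
    by (rule U_add_sum_theta_multiples[of n p]) (use Suc.prems in simp_all)
  have IH: "fk k' (x + ?Y) vs' = (\<Sum>j\<le>n. ?R j (fk (k' + j) x (replicate j ?Y @ vs')))"
    if "length vs' = k'" "set vs' \<subseteq> sv_even" for k' vs'
    by (rule Suc.IH) (use Suc.prems that in simp_all)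
  have "fk k (x + (?Y + a n)) vs = fk k (x + ?Y) vs + fk (Suc k) (x + ?Y) (a n # vs)"
    using fk_Suc[OF xY a Suc.prems(3,4)] by (simp add: add.assoc)
  also have "\<dots> = (\<Sum>j\<le>n. ?R j (P j)) + (\<Sum>j\<le>n. ?R j (fk (Suc k + j) x (replicate j ?Y @ a n # vs)))"
    using a Suc.prems(3,4) unfolding P_def
    by (simp add: IH theta_multiple_def)
  also have "(\<Sum>j\<le>n. ?R j (P j)) = (\<Sum>j\<le>Suc n. ?R j (P j))"
  proof -
    have "P (Suc n) = 0"
      unfolding P_def by (rule fk_power_sum_theta_multiples_zero[of n p]) (use Suc.prems in simp_all)
    then show ?thesis
      by (simp add: rscale_zero_right[OF modules(3,4)])
  qed
  also have "(\<Sum>j\<le>n. ?R j (fk (Suc k + j) x (replicate j ?Y @ a n # vs))) =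
      (\<Sum>j\<le>Suc n. ?R j (rscale_F (of_nat j) (Q j)))"
    unfolding sum_rinv_fact_shift[where n = n]
  proof (intro sum.cong refl)
    fix j
    show "?R j (rscale_F (of_nat j) (fk (Suc k + (j - 1)) x (replicate (j - 1) ?Y @ a n # vs))) =
        ?R j (rscale_F (of_nat j) (Q j))"
      by (cases j) (simp_all add: Q_def rscale_zero_left[OF modules(3,4)])
  qed
  also have "(\<Sum>j\<le>Suc n. ?R j (P j)) + (\<Sum>j\<le>Suc n. ?R j (rscale_F (of_nat j) (Q j))) =
      (\<Sum>j\<le>Suc n. ?R j (fk (k + j) x (replicate j (?Y + a n) @ vs)))"
    unfolding P_def Q_def fk_binomial[OF Suc.prems(2-4) Y a]
    by (simp add: sum.distrib rscale_add_right[OF modules(3,4)])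
  finally show ?case
    by (simp only: sum.lessThan_Suc)
qed

theorem taylor_expansion:
  assumes "x \<in> U" "y \<in> sv_even" "body y = 0"
  defines "t \<equiv> \<lambda>k. rscale_F (rinv (fact k)) (fk k x (replicate k y))"
  shows "finite {k. t k \<noteq> 0} \<and> fk 0 (x + y) [] = (\<Sum>k\<in>{k. t k \<noteq> 0}. t k)"
proof -
  have "y \<in> sv_space"
    using assms(2) by (simp add: sv_even_def)
  then obtain N where N: "y = (\<Sum>p<N. min_layer y p)"
    using assms(3) by (rule sum_min_layer_eq)
  have layers: "\<And>p. p < N \<Longrightarrow> theta_multiple p (min_layer y p)"
    using theta_multiple_min_layer[OF assms(2)] .
  have "t k = 0" if "N < k" for k
    using fk_power_sum_theta_multiples_zero[where n = N and p = "\<lambda>p. p" and vs = "[]", OF layers assms(1) that]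
    by (simp add: N[symmetric] t_def rscale_zero_right[OF modules(3,4)])
  then have support: "{k. t k \<noteq> 0} \<subseteq> {..N}"
    by (auto simp: not_le[symmetric])
  have "fk 0 (x + y) [] = (\<Sum>k\<le>N. t k)"
    using fk_taylor_sum_theta_multiples[where n = N and p = "\<lambda>p. p" and vs = "[]", OF layers assms(1)]
    by (simp add: N[symmetric] t_def)
  also have "\<dots> = (\<Sum>k\<in>{k. t k \<noteq> 0}. t k)"
    using support by (intro sum.mono_neutral_right) auto
  finally show ?thesis
    using finite_subset[OF support] by simp
qed

end

lemma dw_open_add_body_zero:
  fixes x v :: "nat set \<Rightarrow> 'a::{ab_group_add,topological_space} \<times> 'b::ab_group_add"
  assumes "dw_open U" "x \<in> U" "v \<in> sv_even" "body v = 0"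
  shows "x + v \<in> U"
proof -
  obtain W where W: "U = {x \<in> sv_even. fst (body x) \<in> W}"
    using assms(1) unfolding dw_open_def by blast
  have "body (x + v) = body x"
    using assms(4) by (simp add: body_def)
  then show ?thesis
    using assms(2,3) sv_even_add W by auto
qed

theorem proposition4p5:
  fixes sa :: "'r::{comm_ring_1,t2_space} \<Rightarrow> 'a::{ab_group_add,t2_space} \<Rightarrow> 'a"
    and sb :: "'r \<Rightarrow> 'b::{ab_group_add,t2_space} \<Rightarrow> 'b"
    and sc :: "'r \<Rightarrow> 'c::{ab_group_add,t2_space} \<Rightarrow> 'c"
    and sd :: "'r \<Rightarrow> 'd::{ab_group_add,t2_space} \<Rightarrow> 'd"
    and U :: "(nat set \<Rightarrow> 'a \<times> 'b) set"
    and f :: "(nat set \<Rightarrow> 'a \<times> 'b) \<Rightarrow> (nat set \<Rightarrow> 'c \<times> 'd)"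
    and fk :: "nat \<Rightarrow> (nat set \<Rightarrow> 'a \<times> 'b) \<Rightarrow> (nat set \<Rightarrow> 'a \<times> 'b) list \<Rightarrow> (nat set \<Rightarrow> 'c \<times> 'd)"
  assumes R_top: "topring TYPE('r)"
    and R_Q: "\<forall>n::nat. n > 0 \<longrightarrow> (\<exists>u::'r. of_nat n * u = 1)"
    and R_dense_units: "closure {t::'r. is_unit t} = UNIV"
    and R_lkw: "locally_kw (UNIV :: 'r set)"
    and E_mod: "topmod sa" "topmod sb"
    and F_mod: "topmod sc" "topmod sd"
    and E_lkw: "locally_kw (UNIV :: ('a \<times> 'b) set)"
    and F_lkw: "locally_kw (UNIV :: ('c \<times> 'd) set)"
    and U_open: "dw_open U"
    and f_maps: "\<forall>x\<in>U. f x \<in> sv_even"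
    and f_cont: "dw_cont U (\<lambda>x. fst (body x)) (\<lambda>w. fst (body w)) f"
    and f_grounded: "\<forall>e. emb (e, 0) \<in> U \<longrightarrow> (\<exists>c. f (emb (e, 0)) = emb (c, 0))"
    and f_smooth: "smooth_R sa sc {e. emb (e, 0) \<in> U} (\<lambda>e. fst (body (f (emb (e, 0)))))"
    and fk0: "\<forall>x\<in>U. fk 0 x [] = f x"
    and fk_cont: "\<forall>k\<ge>1. dw_cont {(x, vs). x \<in> U \<and> length vs = k \<and> set vs \<subseteq> sv_space}
                     (\<lambda>(x, vs). (fst (body x), \<lambda>i. if i < k then body (vs ! i) else 0))
                     body (\<lambda>(x, vs). fk k x vs)"
    and fk_ml: "\<forall>k\<ge>1. \<forall>x\<in>U. even_ml_susy sa sb sc sd k (fk k x)"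
    and fk_ext: "\<forall>k\<ge>1. \<forall>e vs. emb (e, 0) \<in> U \<and> length vs = k \<longrightarrow>
                   fk k (emb (e, 0)) (map (\<lambda>v. emb (v, 0)) vs) =
                   emb (dk sa sc {e. emb (e, 0) \<in> U} (\<lambda>e. fst (body (f (emb (e, 0))))) k e vs, 0)"
    and fk_step: "\<forall>k p x a vs. x \<in> U \<and> a \<in> sv_even \<and> (\<forall>I. p \<notin> I \<longrightarrow> a I = 0) \<and>
                   length vs = k \<and> set vs \<subseteq> sv_even \<longrightarrow>
                   fk (Suc k) x (a # vs) = fk k (x + a) vs - fk k x vs"
  shows "\<forall>x\<in>U. \<forall>y\<in>sv_even. body y = 0 \<longrightarrow>
           finite {k. rscale sc sd (rinv (fact k)) (fk k x (replicate k y)) \<noteq> 0} \<and>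
           f (x + y) = (\<Sum>k\<in>{k. rscale sc sd (rinv (fact k)) (fk k x (replicate k y)) \<noteq> 0}.
                          rscale sc sd (rinv (fact k)) (fk k x (replicate k y)))"
proof -
  have modules: "module sa" "module sb" "module sc" "module sd"
    using E_mod F_mod by (simp_all add: topmod_def)
  have U_add: "x + v \<in> U" if "x \<in> U" "v \<in> sv_even" "body v = 0" for x v
    using dw_open_add_body_zero[OF U_open that] .
  have "grassmann_taylor sa sb sc sd U fk"
  proof (rule grassmann_taylor.intro[OF modules])
    show "x + a \<in> U" if "x \<in> U" "theta_multiple p a" for x p a
      using U_add[OF that(1) _ theta_multiple_body[OF that(2)]] that(2)
      by (simp add: theta_multiple_def)
  qed (use R_Q fk_ml fk_step in \<open>auto simp: theta_multiple_def\<close>)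
  then interpret grassmann_taylor sa sb sc sd U fk .
  show ?thesis
  proof (intro ballI impI)
    fix x y :: "nat set \<Rightarrow> 'a \<times> 'b"
    assume "x \<in> U" "y \<in> sv_even" "body y = 0"
    then show "finite {k. rscale sc sd (rinv (fact k)) (fk k x (replicate k y)) \<noteq> 0} \<and>
        f (x + y) = (\<Sum>k\<in>{k. rscale sc sd (rinv (fact k)) (fk k x (replicate k y)) \<noteq> 0}.
          rscale sc sd (rinv (fact k)) (fk k x (replicate k y)))"
      using taylor_expansion fk0 U_add by simp
  qed
qed

end
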